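(* Let $\mathcal{S}$ be a finite set with $|\mathcal{S}| = S$, let $d_\pi$ be a categorical distribution on $\mathcal{S}$ (the state distribution induced by a policy $\pi$), and let $d_n$ be the empirical distribution obtained from $n$ independent samples drawn from $d_\pi$, i.e. $d_n(s) = \frac{1}{n}\sum_{j=1}^n \mathbf{1}(X_j = s)$ with $X_1,\dots,X_n$ i.i.d. with law $d_\pi$. Then, for any $\epsilon > 0$, $$\mathbb{P}\left( \mathcal H(d_\pi)-\mathcal H(d_n)>\epsilon \right) \leq 2S \exp\left(-n\frac{\epsilon^2\,\mathrm{Var}(d_\pi)}{2S^3\,\mathcal H^2(d_\pi)}\right),$$ where $\mathcal H(p) = -\sum_{s\in\mathcal S} p(s)\log p(s)$ is the Shannon entropy and $\mathrm{Var}(d_\pi) = \sum_{s\in\mathcal S} d_\pi(s)(1-d_\pi(s))$. Furthermore, to ensure this concentration with confidence $1-\delta$ (i.e. $\mathbb{P}( \mathcal H(d_\pi)-\mathcal H(d_n)>\epsilon ) \le \delta$), it suffices that the number of samples satisfies $$n \geq \frac{2S^3 \mathcal{H}^2(d_\pi)}{\epsilon^2 \mathrm{Var}(d_\pi)} \cdot \ln\frac{2S}{\delta}.$$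
   Context: $\mathcal H$ denotes Shannon entropy of a distribution on the finite set $\mathcal S$; $\mathrm{Var}(d_\pi)=\sum_{s} d_\pi(s)(1-d_\pi(s))$ is the (total) variance associated with the categorical distribution $d_\pi$. The samples are assumed independent. *)

theory Defs
  imports "HOL-Probability.Probability"
begin

text \<open>Shannon entropy (natural logarithm; note 0 * ln 0 = 0 in Isabelle) of a
  distribution on the finite type 'a, given by its probability mass function.\<close>
definition entropy :: "('a::finite \<Rightarrow> real) \<Rightarrow> real" where
  "entropy p = - (\<Sum>s\<in>UNIV. p s * ln (p s))"

definition cat_var :: "('a::finite \<Rightarrow> real) \<Rightarrow> real" where
  "cat_var p = (\<Sum>s\<in>UNIV. p s * (1 - p s))"

definition empirical :: "nat \<Rightarrow> (nat \<Rightarrow> 'a) \<Rightarrow> 'a \<Rightarrow> real" where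
  "empirical n X s = real (card {j\<in>{..<n}. X j = s}) / real n"

definition iid_sample :: "nat \<Rightarrow> 'a pmf \<Rightarrow> (nat \<Rightarrow> 'a) pmf" where
  "iid_sample n d = Pi_pmf {..<n} undefined (\<lambda>_. d)"

end

theory Submission
  imports Defs
begin

text \<open>
  If the plug-in entropy falls short of \<open>H(d)\<close> by more than \<open>\<epsilon>\<close>, then for some symbol \<open>s\<close>
  the term \<open>q ln q - p ln p\<close> (with \<open>q\<close> the empirical and \<open>p\<close> the true frequency of \<open>s\<close>)
  exceeds \<open>\<delta> = \<epsilon> / S\<close>. As this term is at most \<open>q - p\<close> for \<open>q \<ge> p\<close> and at most
  \<open>(p - q) (- ln p)\<close> for \<open>q \<le> p\<close>, the count of \<open>s\<close> must exceed \<open>n (p + \<delta>)\<close> or fall below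
  \<open>n (p - \<delta> / - ln p)\<close>. The count is binomial, and multiplicative Chernoff bounds make both
  events at most \<open>exp (- n \<delta>\<^sup>2 Var / (2 S H\<^sup>2))\<close>; the comparison of exponents rests on the
  entropy-variance inequalities \<open>p (ln p)\<^sup>2 Var \<le> 2 H\<^sup>2\<close> and \<open>2 (1 - p\<^sub>m\<^sub>a\<^sub>x) Var \<le> S H\<^sup>2\<close>.
  A union bound over the \<open>2 S\<close> events gives the tail bound, and inverting it the sample size.
\<close>

section \<open>Chernoff bounds for the binomial distribution\<close>

lemma binomial_pmf_expectation_exp:
  assumes "p \<in> {0..1}"
  shows "measure_pmf.expectation (binomial_pmf n p) (\<lambda>k. exp (s * real k))
           = (1 - p + p * exp s) ^ n"
proof -
  have "measure_pmf.expectation (binomial_pmf n p) (\<lambda>k. exp (s * real k))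
        = (\<Sum>k\<le>n. real (n choose k) * (p * exp s) ^ k * (1 - p) ^ (n - k))"
    using assms
    by (simp add: expectation_binomial_pmf' exp_of_nat_mult[symmetric] power_mult_distrib mult_ac)
  also have "\<dots> = (p * exp s + (1 - p)) ^ n"
    by (simp add: binomial_ring atLeast0AtMost)
  finally show ?thesis by (simp add: add_ac)
qed

lemma power_le_exp_mult:
  fixes x :: real
  assumes "0 \<le> 1 + x"
  shows "(1 + x) ^ n \<le> exp (real n * x)"
proof -
  have "(1 + x) ^ n \<le> exp x ^ n"
    by (rule power_mono) (use assms in auto)
  then show ?thesis by (simp add: exp_of_nat_mult)
qed

lemma binomial_pmf_expectation_exp_le:
  assumes "p \<in> {0..1}"
  shows "measure_pmf.expectation (binomial_pmf n p) (\<lambda>k. exp (s * real k))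
           \<le> exp (real n * p * (exp s - 1))"
proof -
  have "0 \<le> (1 - p) + p * exp s"
    using assms by simp
  then have "0 \<le> 1 + p * (exp s - 1)"
    by (simp add: algebra_simps)
  then show ?thesis
    using power_le_exp_mult[of "p * (exp s - 1)" n]
    by (simp add: binomial_pmf_expectation_exp[OF assms] algebra_simps)
qed

lemma binomial_Chernoff_ge:
  assumes "p \<in> {0..1}" "0 < s"
  shows "measure_pmf.prob (binomial_pmf n p) {k. a \<le> real k}
           \<le> exp (real n * p * (exp s - 1) - s * a)"
proof -
  have "measure_pmf.prob (binomial_pmf n p) {k. a \<le> real k}
        \<le> exp (- s * a) * measure_pmf.expectation (binomial_pmf n p) (\<lambda>k. exp (s * real k))"
    using measure_pmf.Chernoff_ineq_ge[where M = "binomial_pmf n p" and s = s and A = UNIV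
        and f = real and a = a] assms
    by (simp add: set_integrable_def set_lebesgue_integral_def integrable_measure_pmf_finite)
  also have "\<dots> \<le> exp (- s * a) * exp (real n * p * (exp s - 1))"
    using binomial_pmf_expectation_exp_le[OF assms(1)] by (rule mult_left_mono) simp
  finally show ?thesis by (simp add: mult_exp_exp)
qed

lemma binomial_Chernoff_le:
  assumes "p \<in> {0..1}" "0 < s"
  shows "measure_pmf.prob (binomial_pmf n p) {k. real k \<le> a}
           \<le> exp (real n * p * (exp (- s) - 1) + s * a)"
proof -
  have "measure_pmf.prob (binomial_pmf n p) {k. real k \<le> a}
        \<le> exp (s * a) * measure_pmf.expectation (binomial_pmf n p) (\<lambda>k. exp (- s * real k))"
    using measure_pmf.Chernoff_ineq_le[where M = "binomial_pmf n p" and s = s and A = UNIV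
        and f = real and a = a] assms
    by (simp add: set_integrable_def set_lebesgue_integral_def integrable_measure_pmf_finite)
  also have "\<dots> \<le> exp (s * a) * exp (real n * p * (exp (- s) - 1))"
    using binomial_pmf_expectation_exp_le[OF assms(1)] by (rule mult_left_mono) simp
  finally show ?thesis by (simp add: mult_exp_exp add.commute)
qed

lemma exp_minus_le_quadratic:
  fixes x :: real
  assumes "0 \<le> x"
  shows "exp (- x) \<le> 1 - x + x\<^sup>2 / 2"
proof -
  have pos: "0 < 1 + x + x\<^sup>2 / 2" using assms by (simp add: add_pos_nonneg)
  have "exp (- x) = 1 / exp x" by (simp add: exp_minus field_simps)
  also have "\<dots> \<le> 1 / (1 + x + x\<^sup>2 / 2)"
    by (rule divide_left_mono) (use exp_lower_Taylor_quadratic[OF assms] pos in auto)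
  also have "\<dots> \<le> 1 - x + x\<^sup>2 / 2"
  proof -
    have "(1 - x + x\<^sup>2 / 2) * (1 + x + x\<^sup>2 / 2) = 1 + x ^ 4 / 4"
      by (simp add: power2_eq_square power4_eq_xxxx field_simps)
    then show ?thesis using pos by (simp add: divide_le_eq)
  qed
  finally show ?thesis .
qed

lemma binomial_lower_tail:
  assumes "0 < p" "p \<le> 1" "0 < u"
  shows "measure_pmf.prob (binomial_pmf n p) {k. real k \<le> real n * (p - u)}
           \<le> exp (- (real n * (u\<^sup>2 / (2 * p))))"
proof -
  define s where "s = u / p"
  have "0 < s" using assms by (simp add: s_def)
  have "measure_pmf.prob (binomial_pmf n p) {k. real k \<le> real n * (p - u)}
        \<le> exp (real n * p * (exp (- s) - 1) + s * (real n * (p - u)))"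
    using assms \<open>0 < s\<close> by (intro binomial_Chernoff_le) auto
  also have "\<dots> \<le> exp (real n * p * (- s + s\<^sup>2 / 2) + s * (real n * (p - u)))"
    using exp_minus_le_quadratic[of s] \<open>0 < s\<close> assms
    by (intro exp_mono add_right_mono mult_left_mono) auto
  also have "real n * p * (- s + s\<^sup>2 / 2) + s * (real n * (p - u)) = - (real n * (u\<^sup>2 / (2 * p)))"
    using assms by (simp add: s_def field_simps power2_eq_square)
  finally show ?thesis .
qed

lemma binomial_upper_tail:
  assumes "0 \<le> p" "p \<le> 1" "0 < u"
  shows "measure_pmf.prob (binomial_pmf n p) {k. real n * (p + u) \<le> real k}
           \<le> exp (- (real n * (u\<^sup>2 / (2 * max (2 * p) u))))"
proof -
  have tail: "measure_pmf.prob (binomial_pmf n p) {k. real n * (p + u) \<le> real k}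
      \<le> exp (- (real n * (u\<^sup>2 / (2 * max (2 * p) u))))"
    if "0 < s" and exponent: "p * (exp s - 1 - s) - s * u \<le> - (u\<^sup>2 / (2 * max (2 * p) u))" for s
  proof -
    have "measure_pmf.prob (binomial_pmf n p) {k. real n * (p + u) \<le> real k}
          \<le> exp (real n * p * (exp s - 1) - s * (real n * (p + u)))"
      using assms that by (intro binomial_Chernoff_ge) auto
    also have "real n * p * (exp s - 1) - s * (real n * (p + u))
             = real n * (p * (exp s - 1 - s) - s * u)"
      by (simp add: algebra_simps)
    also have "exp \<dots> \<le> exp (real n * - (u\<^sup>2 / (2 * max (2 * p) u)))"
      using exponent by (intro exp_mono mult_left_mono) auto
    finally show ?thesis by simp
  qed
  show ?thesis
  proof (cases "2 * p \<le> u")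
    case True
    have "exp (1::real) \<le> 3" using exp_bound[of 1] by simp
    then have "p * (exp 1 - 1 - 1) \<le> p"
      using assms by (simp add: mult_left_le)
    moreover have "u\<^sup>2 / (2 * max (2 * p) u) = u / 2"
      using True assms by (simp add: max_def power2_eq_square)
    ultimately show ?thesis
      using True by (intro tail[of 1]) auto
  next
    case False
    define s where "s = u / (2 * p)"
    have "0 < s" "s \<le> 1" using False assms by (auto simp: s_def)
    have "exp s - 1 - s \<le> s\<^sup>2" using exp_bound[of s] \<open>0 < s\<close> \<open>s \<le> 1\<close> by simp
    then have "p * (exp s - 1 - s) - s * u \<le> p * s\<^sup>2 - s * u"
      using assms by (simp add: mult_left_mono)
    also have "\<dots> = - (u\<^sup>2 / (2 * max (2 * p) u))"
      using False assms by (simp add: s_def max_def field_simps power2_eq_square)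
    finally show ?thesis by (rule tail[OF \<open>0 < s\<close>])
  qed
qed

section \<open>Symbol counts of i.i.d. samples\<close>

lemma map_pmf_mem_eq_bernoulli_pmf:
  "map_pmf (\<lambda>x. x \<in> A) d = bernoulli_pmf (measure_pmf.prob d A)"
proof (rule pmf_eqI)
  fix b :: bool
  show "pmf (map_pmf (\<lambda>x. x \<in> A) d) b = pmf (bernoulli_pmf (measure_pmf.prob d A)) b"
  proof (cases b)
    case True
    then have "(\<lambda>x. x \<in> A) -` {b} = A" by auto
    then show ?thesis using True by (simp add: pmf_map)
  next
    case False
    then have "(\<lambda>x. x \<in> A) -` {b} = - A" by auto
    then show ?thesis using False
      by (simp add: pmf_map measure_pmf.prob_compl[symmetric] Compl_eq_Diff_UNIV)
  qed
qed

lemma map_pmf_iid_sample_card_eq_binomial_pmf: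
  "map_pmf (\<lambda>X. card {j\<in>{..<n}. X j \<in> A}) (iid_sample n d)
     = binomial_pmf n (measure_pmf.prob d A)"
proof -
  have "binomial_pmf n (measure_pmf.prob d A) =
        map_pmf (\<lambda>f. card {j\<in>{..<n}. f j})
          (Pi_pmf {..<n} (undefined \<in> A) (\<lambda>_. bernoulli_pmf (measure_pmf.prob d A)))"
    by (rule binomial_pmf_altdef') auto
  also have "Pi_pmf {..<n} (undefined \<in> A) (\<lambda>_. bernoulli_pmf (measure_pmf.prob d A))
           = map_pmf (\<lambda>X. (\<lambda>x. x \<in> A) \<circ> X) (Pi_pmf {..<n} undefined (\<lambda>_. d))"
    by (simp add: Pi_pmf_map map_pmf_mem_eq_bernoulli_pmf[symmetric])
  finally show ?thesis
    by (simp add: iid_sample_def pmf.map_comp o_def)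
qed

lemma prob_iid_sample_card_eq_binomial:
  "measure_pmf.prob (iid_sample n d) {X. Q (card {j\<in>{..<n}. X j \<in> A})}
     = measure_pmf.prob (binomial_pmf n (measure_pmf.prob d A)) {k. Q k}"
  by (simp flip: map_pmf_iid_sample_card_eq_binomial_pmf add: vimage_def)

lemma prob_iid_sample_count_eq_binomial:
  "measure_pmf.prob (iid_sample n d) {X. Q (card {j\<in>{..<n}. X j = s})}
     = measure_pmf.prob (binomial_pmf n (pmf d s)) {k. Q k}"
  using prob_iid_sample_card_eq_binomial[of n d Q "{s}"] by (simp add: measure_pmf_single)

lemma prob_iid_sample_count_compl_eq_binomial:
  "measure_pmf.prob (iid_sample n d) {X. Q (n - card {j\<in>{..<n}. X j = s})}
     = measure_pmf.prob (binomial_pmf n (1 - pmf d s)) {k. Q k}"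
proof -
  have "card {j\<in>{..<n}. X j \<in> - {s}} = n - card {j\<in>{..<n}. X j = s}" for X
  proof -
    have "{j\<in>{..<n}. X j \<in> - {s}} = {..<n} - {j\<in>{..<n}. X j = s}" by auto
    then show ?thesis using card_Diff_subset[of "{j\<in>{..<n}. X j = s}" "{..<n}"] by auto
  qed
  moreover have "measure_pmf.prob d (- {s}) = 1 - pmf d s"
    using measure_pmf.prob_compl[of "{s}" d] by (simp add: measure_pmf_single Compl_eq_Diff_UNIV)
  ultimately show ?thesis
    using prob_iid_sample_card_eq_binomial[of n d Q "- {s}"] by simp
qed

lemma card_count_le: "card {j\<in>{..<n}. X j = s} \<le> n"
  using card_mono[of "{..<n}" "{j\<in>{..<n}. X j = s}"] by auto

lemma empirical_nonneg: "0 \<le> empirical n X s"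
  by (simp add: empirical_def)

lemma empirical_le_one: "empirical n X s \<le> 1"
  using card_count_le[of n X s] by (cases "n = 0") (simp_all add: empirical_def divide_le_eq)

section \<open>The function \<open>x ln x\<close>\<close>

lemma x_ln_x_nonpos:
  fixes x :: real
  assumes "0 \<le> x" "x \<le> 1"
  shows "x * ln x \<le> 0"
  using assms by (cases "x = 0") (auto simp: mult_nonneg_nonpos)

lemma minus_x_ln_x_mono:
  fixes a b :: real
  assumes "0 < a" "a \<le> b" "b \<le> exp (-1)"
  shows "- (a * ln a) \<le> - (b * ln b)"
proof -
  have "ln b \<le> -1" using assms by (metis ln_exp ln_le_cancel_iff exp_gt_zero order.strict_trans2)
  have "ln b - ln a = ln (b / a)" using assms by (simp add: ln_div)
  also have "\<dots> \<le> b / a - 1" using assms by (intro ln_le_minus_one) simp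
  finally have "a * (ln b - ln a) \<le> b - a" using assms by (simp add: field_simps)
  moreover have "(b - a) * 1 \<le> (b - a) * (- ln b)"
    using \<open>ln b \<le> -1\<close> assms by (intro mult_left_mono) auto
  ultimately show ?thesis by (simp add: algebra_simps)
qed

lemma minus_x_ln_x_le_exp_minus_one:
  fixes x :: real
  assumes "0 < x"
  shows "- (x * ln x) \<le> exp (-1)"
proof -
  have "ln (1 / (exp 1 * x)) \<le> 1 / (exp 1 * x) - 1"
    using assms by (intro ln_le_minus_one) simp
  also have "ln (1 / (exp 1 * x)) = - 1 - ln x" using assms by (simp add: ln_div ln_mult)
  finally have "x * (- ln x) \<le> x * (1 / (exp 1 * x))"
    using assms by (intro mult_left_mono) auto
  then show ?thesis using assms by (simp add: exp_minus field_simps)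
qed

lemma x_ln_sq_eq:
  fixes x :: real
  assumes "0 < x"
  shows "x * (ln x)\<^sup>2 = 4 * (- (sqrt x * ln (sqrt x)))\<^sup>2"
  using assms by (simp add: ln_sqrt power2_eq_square field_simps)

lemma x_ln_sq_mono:
  fixes a b :: real
  assumes "0 < a" "a \<le> b" "b \<le> exp (-2)"
  shows "a * (ln a)\<^sup>2 \<le> b * (ln b)\<^sup>2"
proof -
  have "a \<le> 1"
    using assms exp_le_one_iff[of "-2 :: real"] by linarith
  have "sqrt (exp (-2)) = exp (-1::real)"
    by (rule real_sqrt_unique) (simp_all add: power2_eq_square flip: exp_add)
  then have "sqrt b \<le> exp (-1)" using assms(3) real_sqrt_le_mono by metis
  then have "- (sqrt a * ln (sqrt a)) \<le> - (sqrt b * ln (sqrt b))"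
    using assms by (intro minus_x_ln_x_mono) auto
  moreover have "0 \<le> - (sqrt a * ln (sqrt a))"
    using assms \<open>a \<le> 1\<close> x_ln_x_nonpos[of "sqrt a"] by simp
  ultimately have "(- (sqrt a * ln (sqrt a)))\<^sup>2 \<le> (- (sqrt b * ln (sqrt b)))\<^sup>2"
    by (intro power_mono)
  then show ?thesis
    using assms by (simp add: x_ln_sq_eq)
qed

lemma x_ln_sq_le:
  fixes x :: real
  assumes "0 < x" "x \<le> 1"
  shows "x * (ln x)\<^sup>2 \<le> 4 * exp (-2)"
proof -
  have "0 \<le> - (sqrt x * ln (sqrt x))"
    using assms x_ln_x_nonpos[of "sqrt x"] by simp
  then have "(- (sqrt x * ln (sqrt x)))\<^sup>2 \<le> (exp (-1))\<^sup>2"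
    using assms minus_x_ln_x_le_exp_minus_one[of "sqrt x"] by (intro power_mono) auto
  also have "(exp (-1::real))\<^sup>2 = exp (-2)"
    by (simp add: power2_eq_square flip: exp_add)
  finally show ?thesis using assms by (simp add: x_ln_sq_eq)
qed

lemma x_ln_x_diff_le_diff:
  fixes p q :: real
  assumes "0 \<le> p" "p \<le> q" "q \<le> 1"
  shows "q * ln q - p * ln p \<le> q - p"
proof (cases "p = 0")
  case True
  then show ?thesis using x_ln_x_nonpos[of q] assms by simp
next
  case False
  then have "0 < p" "0 < q" using assms by auto
  have "(q - p) * ln q \<le> 0" using assms \<open>0 < q\<close> by (simp add: mult_nonneg_nonpos)
  moreover have "ln q - ln p \<le> q / p - 1"
    using \<open>0 < p\<close> \<open>0 < q\<close> ln_le_minus_one[of "q / p"] by (simp add: ln_div)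
  then have "p * (ln q - ln p) \<le> q - p" using \<open>0 < p\<close> by (simp add: field_simps)
  ultimately show ?thesis by (simp add: algebra_simps)
qed

lemma x_ln_x_le_x_mult_ln:
  fixes x c :: real
  assumes "0 \<le> x" "x \<le> c"
  shows "x * ln x \<le> x * ln c"
  using assms by (cases "x = 0") (auto intro: mult_left_mono ln_mono)

lemma x_ln_x_diff_le_diff_mult_ln:
  fixes p q :: real
  assumes "0 \<le> q" "q \<le> p"
  shows "q * ln q - p * ln p \<le> (p - q) * (- ln p)"
  using x_ln_x_le_x_mult_ln[OF assms] by (simp add: algebra_simps)

lemma x_ln_x_gap_cases:
  fixes p q \<delta> :: real
  assumes "0 \<le> p" "0 \<le> q" "q \<le> 1" "0 < \<delta>" "\<delta> < q * ln q - p * ln p"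
  shows "p + \<delta> \<le> q \<or> (0 < p \<and> p < 1 \<and> q \<le> p - \<delta> / - ln p)"
proof (cases "p \<le> q")
  case True
  then show ?thesis using x_ln_x_diff_le_diff[of p q] assms by auto
next
  case False
  then have "\<delta> < (p - q) * - ln p" using x_ln_x_diff_le_diff_mult_ln[of q p] assms by auto
  moreover have "0 < p - q" using False by simp
  ultimately have "0 < - ln p"
    using assms(4) zero_less_mult_iff[of "p - q" "- ln p"] by auto
  moreover have "0 < p" using False assms(2) by simp
  moreover have "\<delta> / - ln p < p - q"
    using \<open>\<delta> < (p - q) * - ln p\<close> by (simp only: pos_divide_less_eq[OF \<open>0 < - ln p\<close>])
  ultimately show ?thesis by simp
qed

section \<open>Entropy and variance of a distribution\<close>

lemma entropy_eq_sum_minus_x_ln_x: "entropy p = (\<Sum>s\<in>UNIV. - (p s * ln (p s)))"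
  by (simp add: entropy_def sum_negf)

lemma entropy_nonneg:
  assumes "\<And>s. 0 \<le> p s" "\<And>s. p s \<le> 1"
  shows "0 \<le> entropy p"
  unfolding entropy_eq_sum_minus_x_ln_x using assms x_ln_x_nonpos by (simp add: sum_nonneg)

lemma minus_pmf_ln_pmf_le_entropy: "- (pmf d s * ln (pmf d s)) \<le> entropy (pmf d)"
  unfolding entropy_eq_sum_minus_x_ln_x
  by (rule member_le_sum) (auto simp: x_ln_x_nonpos pmf_le_1)

lemma pmf_ln_sq_le_two_entropy:
  assumes "exp (-2) \<le> pmf d s"
  shows "pmf d s * (ln (pmf d s))\<^sup>2 \<le> 2 * entropy (pmf d)"
proof -
  have "0 < pmf d s" using assms exp_gt_zero by (rule order.strict_trans2[rotated])
  then have "- ln (pmf d s) \<le> 2" "0 \<le> - ln (pmf d s)"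
    using ln_mono[OF assms] by (simp_all add: pmf_le_1)
  then have "(- ln (pmf d s)) * (- (pmf d s * ln (pmf d s))) \<le> 2 * entropy (pmf d)"
    using minus_pmf_ln_pmf_le_entropy[of d s] x_ln_x_nonpos[of "pmf d s"]
    by (intro mult_mono) (auto simp: pmf_le_1)
  then show ?thesis by (simp add: power2_eq_square mult_ac)
qed

lemma cat_var_nonneg: "0 \<le> cat_var (pmf d)"
  unfolding cat_var_def by (simp add: sum_nonneg pmf_le_1)

lemma cat_var_le_entropy: "cat_var (pmf d) \<le> entropy (pmf d)"
  unfolding entropy_eq_sum_minus_x_ln_x cat_var_def
proof (rule sum_mono)
  fix t
  show "pmf d t * (1 - pmf d t) \<le> - (pmf d t * ln (pmf d t))"
  proof (cases "pmf d t = 0")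
    case False
    then have "ln (pmf d t) \<le> pmf d t - 1" by (simp add: ln_le_minus_one)
    then have "pmf d t * ln (pmf d t) \<le> pmf d t * (pmf d t - 1)" by (rule mult_left_mono) simp
    then show ?thesis by (simp add: algebra_simps)
  qed simp
qed

lemma cat_var_pos_if_entropy_pos:
  assumes "0 < entropy (pmf d)"
  shows "0 < cat_var (pmf d)"
proof (rule ccontr)
  assume "\<not> 0 < cat_var (pmf d)"
  then have "cat_var (pmf d) = 0" using cat_var_nonneg[of d] by simp
  then have "pmf d t * (1 - pmf d t) = 0" for t
    unfolding cat_var_def by (subst (asm) sum_nonneg_eq_0_iff) (auto simp: pmf_le_1)
  then have "pmf d t * ln (pmf d t) = 0" for t
    by (metis diff_eq_eq ln_one mult_eq_0_iff add_0)
  then have "(\<Sum>t\<in>UNIV. pmf d t * ln (pmf d t)) = 0"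
    by (intro sum.neutral) blast
  then have "entropy (pmf d) = 0" by (simp add: entropy_def)
  then show False using assms by simp
qed

lemma sum_pmf_remove: "(\<Sum>t\<in>UNIV - {s}. pmf d t) = 1 - pmf d (s :: 'a :: finite)"
  using sum.remove[of UNIV s "pmf d"] sum_pmf_eq_1[of UNIV d] by simp

lemma pmf_le_one_minus_pmf:
  fixes d :: "'a :: finite pmf"
  assumes "t \<noteq> s"
  shows "pmf d t \<le> 1 - pmf d s"
  unfolding sum_pmf_remove[symmetric] using assms by (intro member_le_sum) auto

lemma cat_var_remove:
  "cat_var (pmf d) = pmf d s * (1 - pmf d s) + (\<Sum>t\<in>UNIV - {s}. pmf d t * (1 - pmf d t))"
  unfolding cat_var_def by (simp add: sum.remove)

lemma cat_var_le_compl: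
  fixes d :: "'a :: finite pmf"
  shows "cat_var (pmf d) \<le> 2 * (1 - pmf d s)"
proof -
  have "(\<Sum>t\<in>UNIV - {s}. pmf d t * (1 - pmf d t)) \<le> (\<Sum>t\<in>UNIV - {s}. pmf d t)"
    by (intro sum_mono) (simp add: mult_left_le)
  moreover have "pmf d s * (1 - pmf d s) \<le> 1 - pmf d s"
    by (simp add: mult_left_le_one_le pmf_le_1)
  ultimately show ?thesis by (simp add: cat_var_remove[of d s] sum_pmf_remove)
qed

lemma cat_var_ge:
  fixes d :: "'a :: finite pmf"
  shows "2 * pmf d s * (1 - pmf d s) \<le> cat_var (pmf d)"
proof -
  have "(\<Sum>t\<in>UNIV - {s}. pmf d t * pmf d s) \<le> (\<Sum>t\<in>UNIV - {s}. pmf d t * (1 - pmf d t))"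
    by (intro sum_mono mult_left_mono) (auto intro: pmf_le_one_minus_pmf)
  moreover have "(\<Sum>t\<in>UNIV - {s}. pmf d t * pmf d s) = (1 - pmf d s) * pmf d s"
    by (simp add: sum_pmf_remove flip: sum_distrib_right)
  ultimately show ?thesis by (simp add: cat_var_remove[of d s] algebra_simps)
qed

lemma sum_pmf_mult_minus_ln_le_entropy:
  fixes d :: "'a :: finite pmf"
  assumes "\<And>t. t \<in> A \<Longrightarrow> pmf d t \<le> c"
  shows "(\<Sum>t\<in>A. pmf d t) * - ln c \<le> entropy (pmf d)"
proof -
  have "(\<Sum>t\<in>A. pmf d t) * - ln c = (\<Sum>t\<in>A. - (pmf d t * ln c))"
    by (simp add: sum_distrib_right sum_negf)
  also have "\<dots> \<le> (\<Sum>t\<in>A. - (pmf d t * ln (pmf d t)))"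
    using assms x_ln_x_le_x_mult_ln by (intro sum_mono) simp
  also have "\<dots> \<le> entropy (pmf d)"
    unfolding entropy_eq_sum_minus_x_ln_x
    by (rule sum_mono2) (auto simp: x_ln_x_nonpos pmf_le_1)
  finally show ?thesis .
qed

lemma minus_compl_ln_compl_le_entropy:
  fixes d :: "'a :: finite pmf"
  shows "- ((1 - pmf d s) * ln (1 - pmf d s)) \<le> entropy (pmf d)"
  using sum_pmf_mult_minus_ln_le_entropy[of "UNIV - {s}" d "1 - pmf d s"] pmf_le_one_minus_pmf[of _ s d]
  by (simp add: sum_pmf_remove)

lemma two_le_card_if_pmf_strictly_between:
  fixes d :: "'a :: finite pmf"
  assumes "0 < pmf d s" "pmf d s < 1"
  shows "2 \<le> CARD('a)"
proof -
  have "UNIV - {s} \<noteq> {}"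
    using assms sum_pmf_remove[of d s] by force
  then obtain t where "t \<noteq> s" by blast
  then have "card {s, t} \<le> CARD('a)" by (intro card_mono) auto
  then show ?thesis using \<open>t \<noteq> s\<close> by simp
qed

lemma entropy_gap_imp_term_gap:
  fixes p q :: "'a :: finite \<Rightarrow> real"
  assumes "real CARD('a) * \<delta> < entropy p - entropy q"
  shows "\<exists>s. \<delta> < q s * ln (q s) - p s * ln (p s)"
proof (rule ccontr)
  assume no_gap: "\<nexists>s. \<delta> < q s * ln (q s) - p s * ln (p s)"
  have "entropy p - entropy q = (\<Sum>s\<in>UNIV. q s * ln (q s) - p s * ln (p s))"
    by (simp add: entropy_def sum_subtractf)
  also have "\<dots> \<le> (\<Sum>_\<in>(UNIV :: 'a set). \<delta>)"
    by (rule sum_mono) (use no_gap in \<open>simp add: not_less\<close>)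
  finally show False using assms by simp
qed

lemma pmf_mode_exists: "\<exists>t0. \<forall>t. pmf d t \<le> pmf d (t0 :: 'a :: finite)"
  using Max_in[of "range (pmf d)"] Max_ge[of "range (pmf d)"] by fastforce

context
  fixes d :: "'a :: finite pmf" and t0 :: 'a
  assumes mode: "\<And>t. pmf d t \<le> pmf d t0"
begin

lemma one_le_card_mult_mode: "1 \<le> real CARD('a) * pmf d t0"
  using sum_mono[of UNIV "pmf d" "\<lambda>_. pmf d t0"] mode sum_pmf_eq_1[of UNIV d] by simp

lemma mode_pos: "0 < pmf d t0"
  using one_le_card_mult_mode by (cases "pmf d t0 = 0") auto

lemma minus_ln_mode_le_entropy: "- ln (pmf d t0) \<le> entropy (pmf d)"
  using sum_pmf_mult_minus_ln_le_entropy[of UNIV d "pmf d t0"] mode sum_pmf_eq_1[of UNIV d]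
  by simp

lemma mode_compl_mult_cat_var_le:
  "2 * (1 - pmf d t0) * cat_var (pmf d) \<le> real CARD('a) * (entropy (pmf d))\<^sup>2"
proof -
  let ?m = "1 - pmf d t0" and ?V = "cat_var (pmf d)" and ?S = "real CARD('a)"
  have "2 * ?m = 2 * ?m * 1" by simp
  also have "\<dots> \<le> 2 * ?m * (?S * pmf d t0)"
    using one_le_card_mult_mode pmf_le_1[of d t0] by (intro mult_left_mono) auto
  also have "\<dots> = ?S * (2 * pmf d t0 * ?m)" by simp
  also have "\<dots> \<le> ?S * ?V" using cat_var_ge[of d t0] by (intro mult_left_mono) auto
  finally have "2 * ?m * ?V \<le> ?S * ?V * ?V"
    using cat_var_nonneg[of d] by (intro mult_right_mono)
  also have "\<dots> \<le> ?S * entropy (pmf d) * entropy (pmf d)"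
    using cat_var_le_entropy[of d] cat_var_nonneg[of d] by (intro mult_mono mult_left_mono) auto
  finally show ?thesis by (simp add: power2_eq_square)
qed

lemma two_exp_minus_two_le_entropy:
  assumes "exp (-2) < 1 - pmf d t0"
  shows "2 * exp (-2) \<le> entropy (pmf d)"
proof (cases "2 * exp (-2) \<le> 1 - pmf d t0")
  case True
  have "ln (pmf d t0) \<le> pmf d t0 - 1"
    using mode_pos by (rule ln_le_minus_one)
  then show ?thesis using True minus_ln_mode_le_entropy by linarith
next
  case False
  have "2 * exp (-2) \<le> exp 1 * exp (-2::real)"
    using exp_ge_add_one_self[of 1] by (intro mult_right_mono) auto
  also have "\<dots> = exp (-1)"
    by (simp add: mult_exp_exp)
  finally have "1 - pmf d t0 \<le> exp (-1)"
    using False by linarith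
  then have "- (exp (-2) * ln (exp (-2))) \<le> - ((1 - pmf d t0) * ln (1 - pmf d t0))"
    using assms by (intro minus_x_ln_x_mono) auto
  then show ?thesis
    using minus_compl_ln_compl_le_entropy[of d t0] by simp
qed

lemma pmf_ln_sq_mult_cat_var_le_concentrated:
  assumes "1 - pmf d t0 \<le> exp (-2)" "0 < pmf d s" "pmf d s < exp (-2)"
  shows "pmf d s * (ln (pmf d s))\<^sup>2 * cat_var (pmf d) \<le> 2 * (entropy (pmf d))\<^sup>2"
proof -
  let ?x = "pmf d s" and ?m = "1 - pmf d t0"
  have "exp (-2::real) < 1 / 2"
    using exp_ge_add_one_self[of 2] by (simp add: exp_minus field_simps)
  then have "s \<noteq> t0" using assms by auto
  then have "?x \<le> ?m" by (rule pmf_le_one_minus_pmf)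
  then have "?x * (ln ?x)\<^sup>2 \<le> ?m * (ln ?m)\<^sup>2"
    using assms by (intro x_ln_sq_mono) auto
  moreover have "cat_var (pmf d) \<le> 2 * ?m"
    by (rule cat_var_le_compl)
  ultimately have "?x * (ln ?x)\<^sup>2 * cat_var (pmf d) \<le> ?m * (ln ?m)\<^sup>2 * (2 * ?m)"
    by (rule mult_mono) (use assms \<open>?x \<le> ?m\<close> cat_var_nonneg[of d] in auto)
  also have "\<dots> = 2 * (- (?m * ln ?m))\<^sup>2" by (simp add: power2_eq_square)
  also have "\<dots> \<le> 2 * (entropy (pmf d))\<^sup>2"
  proof -
    have "0 \<le> - (?m * ln ?m)"
      using x_ln_x_nonpos[of ?m] assms \<open>?x \<le> ?m\<close> by (simp add: pmf_le_1)
    then have "(- (?m * ln ?m))\<^sup>2 \<le> (entropy (pmf d))\<^sup>2"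
      using minus_compl_ln_compl_le_entropy[of d t0] by (intro power_mono)
    then show ?thesis by simp
  qed
  finally show ?thesis .
qed

end

lemma pmf_ln_sq_mult_cat_var_le:
  fixes d :: "'a :: finite pmf"
  shows "pmf d s * (ln (pmf d s))\<^sup>2 * cat_var (pmf d) \<le> 2 * (entropy (pmf d))\<^sup>2"
proof -
  let ?x = "pmf d s" and ?V = "cat_var (pmf d)" and ?H = "entropy (pmf d)"
  obtain t0 where mode: "\<And>t. pmf d t \<le> pmf d t0" using pmf_mode_exists by blast
  have via_entropy: "?x * (ln ?x)\<^sup>2 * ?V \<le> 2 * ?H\<^sup>2" if "?x * (ln ?x)\<^sup>2 \<le> 2 * ?H"
  proof -
    have "?x * (ln ?x)\<^sup>2 * ?V \<le> 2 * ?H * ?V"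
      using that cat_var_nonneg by (rule mult_right_mono)
    also have "\<dots> \<le> 2 * ?H * ?H"
      using cat_var_le_entropy entropy_nonneg[of "pmf d"] by (intro mult_left_mono) (auto simp: pmf_le_1)
    finally show ?thesis by (simp add: power2_eq_square)
  qed
  consider "?x = 0" | "exp (-2) \<le> ?x" | "0 < ?x" "exp (-2) < 1 - pmf d t0"
    | "0 < ?x" "?x < exp (-2)" "1 - pmf d t0 \<le> exp (-2)"
    by fastforce
  then show ?thesis
  proof cases
    case 1
    then show ?thesis by simp
  next
    case 2
    then show ?thesis by (intro via_entropy pmf_ln_sq_le_two_entropy)
  next
    case 3
    have "?x * (ln ?x)\<^sup>2 \<le> 4 * exp (-2)"
      using 3 by (intro x_ln_sq_le) (simp_all add: pmf_le_1)
    also have "\<dots> \<le> 2 * ?H"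
      using two_exp_minus_two_le_entropy[OF mode 3(2)] by simp
    finally show ?thesis by (rule via_entropy)
  next
    case 4
    then show ?thesis by (intro pmf_ln_sq_mult_cat_var_le_concentrated[OF mode])
  qed
qed

section \<open>Concentration of the plug-in entropy\<close>

text \<open>With \<open>\<delta> = \<epsilon> / S\<close> this is the exponent \<open>\<epsilon>\<^sup>2 Var / (2 S\<^sup>3 H\<^sup>2)\<close> of the tail bound.\<close>

definition deviation_rate :: "'a :: finite pmf \<Rightarrow> real \<Rightarrow> real" where
  "deviation_rate d \<delta> = \<delta>\<^sup>2 * cat_var (pmf d) / (2 * real CARD('a) * (entropy (pmf d))\<^sup>2)"

lemma exp_tail_le_deviation_rate:
  fixes d :: "'a :: finite pmf"
  assumes "0 < c" "c * cat_var (pmf d) \<le> real CARD('a) * (entropy (pmf d))\<^sup>2"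
  shows "exp (- (real n * (\<delta>\<^sup>2 / (2 * c)))) \<le> exp (- (real n * deviation_rate d \<delta>))"
proof -
  have "deviation_rate d \<delta> \<le> \<delta>\<^sup>2 / (2 * c)"
  proof (cases "entropy (pmf d) = 0")
    case False
    let ?a = "real CARD('a) * (entropy (pmf d))\<^sup>2"
    have "0 < ?a" using False by simp
    have "deviation_rate d \<delta> = \<delta>\<^sup>2 * (c * cat_var (pmf d)) / (2 * c * ?a)"
      using assms(1) by (simp add: deviation_rate_def field_simps)
    also have "\<dots> \<le> \<delta>\<^sup>2 * ?a / (2 * c * ?a)"
      using assms \<open>0 < ?a\<close> by (intro divide_right_mono mult_left_mono) auto
    also have "\<dots> = \<delta>\<^sup>2 / (2 * c)"
      using \<open>0 < ?a\<close> False by simp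
    finally show ?thesis .
  qed (use assms in \<open>simp add: deviation_rate_def\<close>)
  then have "real n * deviation_rate d \<delta> \<le> real n * (\<delta>\<^sup>2 / (2 * c))"
    by (rule mult_left_mono) simp
  then show ?thesis by simp
qed

lemma prob_count_below_le:
  fixes d :: "'a :: finite pmf"
  assumes "0 < \<delta>" "0 < pmf d s" "pmf d s < 1"
  shows "measure_pmf.prob (iid_sample n d)
           {X. real (card {j\<in>{..<n}. X j = s}) \<le> real n * (pmf d s - \<delta> / - ln (pmf d s))}
         \<le> exp (- (real n * deviation_rate d \<delta>))"
proof -
  let ?p = "pmf d s"
  have "0 < - ln ?p" using assms by simp
  have "measure_pmf.prob (iid_sample n d)
           {X. real (card {j\<in>{..<n}. X j = s}) \<le> real n * (?p - \<delta> / - ln ?p)}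
        = measure_pmf.prob (binomial_pmf n ?p) {k. real k \<le> real n * (?p - \<delta> / - ln ?p)}"
    by (rule prob_iid_sample_count_eq_binomial)
  also have "\<dots> \<le> exp (- (real n * ((\<delta> / - ln ?p)\<^sup>2 / (2 * ?p))))"
    using assms divide_pos_pos[OF assms(1) \<open>0 < - ln ?p\<close>] by (intro binomial_lower_tail) auto
  also have "(\<delta> / - ln ?p)\<^sup>2 / (2 * ?p) = \<delta>\<^sup>2 / (2 * (?p * (ln ?p)\<^sup>2))"
    by (simp add: power_divide)
  also have "exp (- (real n * \<dots>)) \<le> exp (- (real n * deviation_rate d \<delta>))"
  proof (rule exp_tail_le_deviation_rate)
    show "0 < ?p * (ln ?p)\<^sup>2" using assms \<open>0 < - ln ?p\<close> by simp
    have "?p * (ln ?p)\<^sup>2 * cat_var (pmf d) \<le> 2 * (entropy (pmf d))\<^sup>2"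
      by (rule pmf_ln_sq_mult_cat_var_le)
    also have "\<dots> \<le> real CARD('a) * (entropy (pmf d))\<^sup>2"
      using two_le_card_if_pmf_strictly_between[OF assms(2,3)] by (intro mult_right_mono) auto
    finally show "?p * (ln ?p)\<^sup>2 * cat_var (pmf d) \<le> real CARD('a) * (entropy (pmf d))\<^sup>2" .
  qed
  finally show ?thesis .
qed

context
  fixes d :: "'a :: finite pmf" and t0 :: 'a
  assumes mode: "\<And>t. pmf d t \<le> pmf d t0"
begin

text \<open>
  At the mode the comparison \<open>2 p Var \<le> S H\<^sup>2\<close> used off the mode may fail; instead the excess
  of the count of \<open>t0\<close> is the deficit of the count of all other symbols, whose frequency
  \<open>1 - p\<close> is controlled by \<open>2 (1 - p) Var \<le> S H\<^sup>2\<close>.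
\<close>

lemma prob_mode_count_above_le:
  assumes "0 < \<delta>" "\<delta> \<le> entropy (pmf d)"
  shows "measure_pmf.prob (iid_sample n d)
           {X. real n * (pmf d t0 + \<delta>) \<le> real (card {j\<in>{..<n}. X j = t0})}
         \<le> exp (- (real n * deviation_rate d \<delta>))"
proof -
  let ?p = "pmf d t0" and ?V = "cat_var (pmf d)"
  have "0 < ?V" using assms by (intro cat_var_pos_if_entropy_pos) simp
  then have "0 < 1 - ?p"
    using cat_var_le_compl[of d t0] by simp
  have "real n * (?p + \<delta>) \<le> real (card {j\<in>{..<n}. X j = t0})
        \<longleftrightarrow> real (n - card {j\<in>{..<n}. X j = t0}) \<le> real n * ((1 - ?p) - \<delta>)" for X
    using card_count_le[of n X t0] by (simp add: algebra_simps)
  then have "measure_pmf.prob (iid_sample n d)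
        {X. real n * (?p + \<delta>) \<le> real (card {j\<in>{..<n}. X j = t0})}
      = measure_pmf.prob (binomial_pmf n (1 - ?p)) {k. real k \<le> real n * ((1 - ?p) - \<delta>)}"
    using prob_iid_sample_count_compl_eq_binomial[of n d "\<lambda>k. real k \<le> real n * ((1 - ?p) - \<delta>)" t0]
    by simp
  also have "\<dots> \<le> exp (- (real n * (\<delta>\<^sup>2 / (2 * (1 - ?p)))))"
    using assms \<open>0 < 1 - ?p\<close> by (intro binomial_lower_tail) auto
  also have "\<dots> \<le> exp (- (real n * deviation_rate d \<delta>))"
  proof (rule exp_tail_le_deviation_rate)
    have "0 \<le> (1 - ?p) * ?V" using \<open>0 < 1 - ?p\<close> \<open>0 < ?V\<close> by simp
    moreover have "2 * ((1 - ?p) * ?V) \<le> real CARD('a) * (entropy (pmf d))\<^sup>2"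
      using mode_compl_mult_cat_var_le[OF mode] by (simp only: mult.assoc)
    ultimately show "(1 - ?p) * ?V \<le> real CARD('a) * (entropy (pmf d))\<^sup>2" by linarith
  qed (use \<open>0 < 1 - ?p\<close> in simp)
  finally show ?thesis .
qed

lemma prob_count_above_le_off_mode:
  assumes "0 < \<delta>" "\<delta> \<le> entropy (pmf d)" "s \<noteq> t0"
  shows "measure_pmf.prob (iid_sample n d)
           {X. real n * (pmf d s + \<delta>) \<le> real (card {j\<in>{..<n}. X j = s})}
         \<le> exp (- (real n * deviation_rate d \<delta>))"
proof -
  let ?p = "pmf d s" and ?V = "cat_var (pmf d)" and ?H = "entropy (pmf d)" and ?S = "real CARD('a)"
  have "0 < ?V" using assms by (intro cat_var_pos_if_entropy_pos) simp
  have "measure_pmf.prob (iid_sample n d)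
        {X. real n * (?p + \<delta>) \<le> real (card {j\<in>{..<n}. X j = s})}
      = measure_pmf.prob (binomial_pmf n ?p) {k. real n * (?p + \<delta>) \<le> real k}"
    by (rule prob_iid_sample_count_eq_binomial)
  also have "\<dots> \<le> exp (- (real n * (\<delta>\<^sup>2 / (2 * max (2 * ?p) \<delta>))))"
    using assms by (intro binomial_upper_tail) (auto simp: pmf_le_1)
  also have "\<dots> \<le> exp (- (real n * deviation_rate d \<delta>))"
  proof (rule exp_tail_le_deviation_rate)
    show "0 < max (2 * ?p) \<delta>" using assms by simp
    have "\<delta> * ?V \<le> ?H * ?H"
      using assms cat_var_le_entropy[of d] \<open>0 < ?V\<close> by (intro mult_mono) auto
    also have "\<dots> \<le> ?S * ?H\<^sup>2"
      using mult_right_mono[of 1 ?S "?H\<^sup>2"] by (simp add: power2_eq_square Suc_le_eq)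
    finally have "\<delta> * ?V \<le> ?S * ?H\<^sup>2" .
    moreover have "2 * ?p * ?V \<le> 2 * (1 - pmf d t0) * ?V"
      using pmf_le_one_minus_pmf[OF assms(3), of d] \<open>0 < ?V\<close> by simp
    ultimately show "max (2 * ?p) \<delta> * ?V \<le> ?S * ?H\<^sup>2"
      using mode_compl_mult_cat_var_le[OF mode] by (simp add: max_def)
  qed
  finally show ?thesis .
qed

end

lemma prob_count_above_le:
  fixes d :: "'a :: finite pmf"
  assumes "0 < \<delta>" "\<delta> \<le> entropy (pmf d)"
  shows "measure_pmf.prob (iid_sample n d)
           {X. real n * (pmf d s + \<delta>) \<le> real (card {j\<in>{..<n}. X j = s})}
         \<le> exp (- (real n * deviation_rate d \<delta>))"
proof -
  obtain t0 where mode: "\<And>t. pmf d t \<le> pmf d t0" using pmf_mode_exists by blast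
  show ?thesis
  proof (cases "s = t0")
    case True
    then show ?thesis using prob_mode_count_above_le[OF mode assms] by simp
  next
    case False
    then show ?thesis using prob_count_above_le_off_mode[OF mode assms] by simp
  qed
qed

lemma entropy_term_gap_subset:
  assumes "0 < n" "0 < \<delta>"
  shows "{X. \<delta> < empirical n X s * ln (empirical n X s) - pmf d s * ln (pmf d s)}
    \<subseteq> {X. 0 < pmf d s \<and> pmf d s < 1
           \<and> real (card {j\<in>{..<n}. X j = s}) \<le> real n * (pmf d s - \<delta> / - ln (pmf d s))}
      \<union> {X. real n * (pmf d s + \<delta>) \<le> real (card {j\<in>{..<n}. X j = s})}"
proof
  fix X assume "X \<in> {X. \<delta> < empirical n X s * ln (empirical n X s) - pmf d s * ln (pmf d s)}"
  then have "pmf d s + \<delta> \<le> empirical n X s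
      \<or> (0 < pmf d s \<and> pmf d s < 1 \<and> empirical n X s \<le> pmf d s - \<delta> / - ln (pmf d s))"
    using assms(2) by (intro x_ln_x_gap_cases) (simp_all add: empirical_nonneg empirical_le_one)
  moreover have "real (card {j\<in>{..<n}. X j = s}) = real n * empirical n X s"
    using assms(1) by (simp add: empirical_def)
  ultimately show "X \<in> {X. 0 < pmf d s \<and> pmf d s < 1
           \<and> real (card {j\<in>{..<n}. X j = s}) \<le> real n * (pmf d s - \<delta> / - ln (pmf d s))}
      \<union> {X. real n * (pmf d s + \<delta>) \<le> real (card {j\<in>{..<n}. X j = s})}"
    by (auto intro: mult_left_mono)
qed

lemma prob_entropy_term_gap_le:
  fixes d :: "'a :: finite pmf"
  assumes "0 < n" "0 < \<delta>" "\<delta> \<le> entropy (pmf d)"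
  shows "measure_pmf.prob (iid_sample n d)
           {X. \<delta> < empirical n X s * ln (empirical n X s) - pmf d s * ln (pmf d s)}
         \<le> 2 * exp (- (real n * deviation_rate d \<delta>))"
proof -
  let ?p = "pmf d s" and ?N = "\<lambda>X. real (card {j\<in>{..<n}. X j = s})"
  let ?below = "{X. 0 < ?p \<and> ?p < 1 \<and> ?N X \<le> real n * (?p - \<delta> / - ln ?p)}"
  let ?above = "{X. real n * (?p + \<delta>) \<le> ?N X}"
  have "measure_pmf.prob (iid_sample n d)
        {X. \<delta> < empirical n X s * ln (empirical n X s) - ?p * ln ?p}
      \<le> measure_pmf.prob (iid_sample n d) (?below \<union> ?above)"
    using entropy_term_gap_subset[OF assms(1,2)] by (rule measure_pmf.finite_measure_mono) simp
  also have "\<dots> \<le> measure_pmf.prob (iid_sample n d) ?below + measure_pmf.prob (iid_sample n d) ?above"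
    by (rule measure_Un_le) simp_all
  also have "measure_pmf.prob (iid_sample n d) ?below \<le> exp (- (real n * deviation_rate d \<delta>))"
  proof (cases "0 < ?p \<and> ?p < 1")
    case True
    then show ?thesis using prob_count_below_le[OF assms(2), of d s n] by simp
  next
    case False
    then have no_below: "?below = {}" by auto
    show ?thesis unfolding no_below by simp
  qed
  also have "measure_pmf.prob (iid_sample n d) ?above \<le> exp (- (real n * deviation_rate d \<delta>))"
    using assms(2,3) by (rule prob_count_above_le)
  finally show ?thesis by simp
qed

lemma entropy_gap_empty:
  fixes d :: "'a :: finite pmf"
  assumes "entropy (pmf d) \<le> \<epsilon>"
  shows "{X :: nat \<Rightarrow> 'a. entropy (pmf d) - entropy (empirical n X) > \<epsilon>} = {}"
proof -
  have "entropy (pmf d) - entropy (empirical n X) \<le> \<epsilon>" for X :: "nat \<Rightarrow> 'a"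
    using assms entropy_nonneg[of "empirical n X"] by (simp add: empirical_nonneg empirical_le_one)
  then show ?thesis by (auto simp: not_less)
qed

lemma prob_entropy_gap_le:
  fixes d :: "'a :: finite pmf"
  assumes "0 < n" "0 < \<epsilon>" "\<epsilon> \<le> entropy (pmf d)"
  shows "measure_pmf.prob (iid_sample n d) {X. entropy (pmf d) - entropy (empirical n X) > \<epsilon>}
         \<le> 2 * real CARD('a) * exp (- (real n * deviation_rate d (\<epsilon> / real CARD('a))))"
proof -
  let ?S = "real CARD('a)"
  let ?gap = "\<lambda>s. {X. \<epsilon> / ?S < empirical n X s * ln (empirical n X s) - pmf d s * ln (pmf d s)}"
  have "\<epsilon> / ?S \<le> \<epsilon>" using assms(2) by (simp add: divide_le_eq Suc_le_eq)
  have "{X. entropy (pmf d) - entropy (empirical n X) > \<epsilon>} \<subseteq> (\<Union>s. ?gap s)"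
    using entropy_gap_imp_term_gap[of "\<epsilon> / ?S" "pmf d"] by auto
  then have "measure_pmf.prob (iid_sample n d) {X. entropy (pmf d) - entropy (empirical n X) > \<epsilon>}
      \<le> measure_pmf.prob (iid_sample n d) (\<Union>s. ?gap s)"
    by (rule measure_pmf.finite_measure_mono) simp
  also have "\<dots> \<le> (\<Sum>s\<in>UNIV. measure_pmf.prob (iid_sample n d) (?gap s))"
    by (rule measure_pmf.finite_measure_subadditive_finite) auto
  also have "\<dots> \<le> (\<Sum>_\<in>(UNIV :: 'a set). 2 * exp (- (real n * deviation_rate d (\<epsilon> / ?S))))"
    using assms \<open>\<epsilon> / ?S \<le> \<epsilon>\<close> by (intro sum_mono prob_entropy_term_gap_le) auto
  finally show ?thesis by simp
qed

lemma le_if_exp_tail_bound: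
  fixes P A K x \<delta> :: real
  assumes "P \<le> A * exp (- x / K)" "0 < A" "0 < K" "0 < \<delta>" "K * ln (A / \<delta>) \<le> x"
  shows "P \<le> \<delta>"
proof -
  have "ln (A / \<delta>) \<le> x / K" using assms(3,5) by (simp add: le_divide_eq mult.commute)
  then have "exp (- x / K) \<le> exp (- ln (A / \<delta>))" by simp
  also have "\<dots> = \<delta> / A" using assms(2,4) by (simp add: exp_minus)
  finally show ?thesis using assms(1,2) by (simp add: field_simps)
qed

theorem theorem4p1:
  fixes d :: "'a::finite pmf" and n :: nat and \<epsilon> :: real
  assumes "n > 0" and "\<epsilon> > 0"
  shows "measure_pmf.prob (iid_sample n d)
           {X. entropy (pmf d) - entropy (empirical n X) > \<epsilon>}
         \<le> 2 * real CARD('a) * exp (- real n * (\<epsilon>\<^sup>2 * cat_var (pmf d))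
                 / (2 * real CARD('a) ^ 3 * (entropy (pmf d))\<^sup>2))
       \<and> (\<forall>\<delta>. 0 < \<delta> \<and> \<delta> < 1 \<and>
           real n \<ge> 2 * real CARD('a) ^ 3 * (entropy (pmf d))\<^sup>2 / (\<epsilon>\<^sup>2 * cat_var (pmf d))
                      * ln (2 * real CARD('a) / \<delta>) \<longrightarrow>
           measure_pmf.prob (iid_sample n d)
             {X. entropy (pmf d) - entropy (empirical n X) > \<epsilon>} \<le> \<delta>)"
proof (cases "\<epsilon> \<le> entropy (pmf d)")
  case True
  let ?E = "{X. entropy (pmf d) - entropy (empirical n X) > \<epsilon>}"
  let ?S = "real CARD('a)" and ?H = "entropy (pmf d)" and ?V = "cat_var (pmf d)"
  let ?K = "2 * ?S ^ 3 * ?H\<^sup>2 / (\<epsilon>\<^sup>2 * ?V)"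
  have "0 < ?V" using assms True by (intro cat_var_pos_if_entropy_pos) simp
  then have "0 < ?K" using assms True by simp
  have "real n * deviation_rate d (\<epsilon> / ?S) = real n * (\<epsilon>\<^sup>2 * ?V) / (2 * ?S ^ 3 * ?H\<^sup>2)"
    by (simp add: deviation_rate_def field_simps power3_eq_cube power2_eq_square)
  then have bound: "measure_pmf.prob (iid_sample n d) ?E
      \<le> 2 * ?S * exp (- real n * (\<epsilon>\<^sup>2 * ?V) / (2 * ?S ^ 3 * ?H\<^sup>2))"
    using prob_entropy_gap_le[OF assms True] by simp
  moreover have "measure_pmf.prob (iid_sample n d) ?E \<le> \<delta>"
    if "0 < \<delta>" "?K * ln (2 * ?S / \<delta>) \<le> real n" for \<delta>
  proof (rule le_if_exp_tail_bound[OF _ _ \<open>0 < ?K\<close> that])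
    show "measure_pmf.prob (iid_sample n d) ?E \<le> 2 * ?S * exp (- real n / ?K)"
      using bound by simp
  qed simp
  ultimately show ?thesis by auto
next
  case False
  then show ?thesis by (simp add: entropy_gap_empty)
qed

end
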